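(* Let $T>0$ and let $f:\Omega\times[0,T]\times\mathbb{R}\times\mathbb{R}^d\to\mathbb{R}$ satisfy $f(\cdot,y,z)\in L^2_{\mathcal{F}}(0,T)$ for each $(y,z)$ and $|f(t,y,z)-f(t,y',z')|\le\mu(|y-y'|+|z-z'|)$. For $(t,y,z)\in[0,T]\times\mathbb{R}\times\mathbb{R}^d$ let $(Y^{t,y,z}_s)_{s\in[t,T]}$ solve $Y^{t,y,z}_s=y-\int_t^sf(r,Y^{t,y,z}_r,z)dr+z(B_s-B_t)$. Suppose that for each $(t,y,z)\in[0,T]\times\mathbb{R}\times\mathbb{R}^d$, $$f(\omega,r,Y^{t,y,z}_r,z)\ge0\ (\text{resp. }=0)\quad dr\times dP\text{-a.s. on }[t,T]\times\Omega.$$ Then for each $(y,z)\in\mathbb{R}\times\mathbb{R}^d$, $f(\omega,t,y,z)\ge0$ (resp. $=0$) $dt\times dP$-a.s. on $[0,T]\times\Omega$.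
   Context: $(\Omega,\mathcal{F},P)$ carries a $d$-dimensional Brownian motion $B$ with filtration $\mathcal{F}_t=\sigma\{B_s:s\le t\}$; $L^2_{\mathcal{F}}(0,T)$ denotes real predictable processes $\phi$ with $E\int_0^T|\phi_s|^2ds<\infty$. *)

theory Defs
  imports "HOL-Probability.Probability"
begin

definition brownian_motion :: "'a measure \<Rightarrow> (real \<Rightarrow> 'a \<Rightarrow> real ^ 'd) \<Rightarrow> bool" where
  "brownian_motion M B \<longleftrightarrow>
     prob_space M \<and>
     (\<forall>t. B t \<in> borel_measurable M) \<and>
     (\<forall>\<omega>\<in>space M. B 0 \<omega> = 0) \<and>
     (\<forall>\<omega>\<in>space M. continuous_on {0..} (\<lambda>t. B t \<omega>)) \<and>
     (\<forall>(ts :: nat \<Rightarrow> real) n. 0 \<le> ts 0 \<and> (\<forall>i<n. ts i \<le> ts (Suc i)) \<longrightarrow>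
        prob_space.indep_vars M (\<lambda>_. borel) (\<lambda>i \<omega>. B (ts (Suc i)) \<omega> - B (ts i) \<omega>) {..<n}) \<and>
     (\<forall>s t. 0 \<le> s \<and> s < t \<longrightarrow>
        prob_space.indep_vars M (\<lambda>_. borel) (\<lambda>i \<omega>. (B t \<omega> - B s \<omega>) $ i) UNIV \<and>
        (\<forall>i. distributed M lborel (\<lambda>\<omega>. (B t \<omega> - B s \<omega>) $ i)
                (\<lambda>x. ennreal (normal_density 0 (sqrt (t - s)) x))))"

definition bm_filtration :: "'a measure \<Rightarrow> (real \<Rightarrow> 'a \<Rightarrow> real ^ 'd) \<Rightarrow> real \<Rightarrow> 'a set set" where
  "bm_filtration M B t =
     sigma_sets (space M) (\<Union>s\<in>{0..t}. {B s -` A \<inter> space M | A. A \<in> sets borel})"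

definition predictable_sets :: "'a measure \<Rightarrow> (real \<Rightarrow> 'a \<Rightarrow> real ^ 'd) \<Rightarrow> real \<Rightarrow> (real \<times> 'a) set set" where
  "predictable_sets M B T =
     sigma_sets ({0..T} \<times> space M)
       ({{0} \<times> A | A. A \<in> bm_filtration M B 0} \<union>
        {{s<..u} \<times> A | s u A. 0 \<le> s \<and> s \<le> u \<and> u \<le> T \<and> A \<in> bm_filtration M B s})"

definition L2F :: "'a measure \<Rightarrow> (real \<Rightarrow> 'a \<Rightarrow> real ^ 'd) \<Rightarrow> real \<Rightarrow> ('a \<Rightarrow> real \<Rightarrow> real) \<Rightarrow> bool" where
  "L2F M B T \<phi> \<longleftrightarrow>
     (\<forall>A\<in>sets (borel :: real measure).
        {p \<in> {0..T} \<times> space M. \<phi> (snd p) (fst p) \<in> A} \<in> predictable_sets M B T) \<and>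
     (\<integral>\<^sup>+ p. indicator ({0..T} \<times> space M) p * ennreal ((\<phi> (snd p) (fst p))\<^sup>2) \<partial>(lborel \<Otimes>\<^sub>M M)) < \<infinity>"

definition solves_ode :: "'a measure \<Rightarrow> (real \<Rightarrow> 'a \<Rightarrow> real ^ 'd) \<Rightarrow> real \<Rightarrow>
    ('a \<Rightarrow> real \<Rightarrow> real \<Rightarrow> real ^ 'd \<Rightarrow> real) \<Rightarrow> real \<Rightarrow> real \<Rightarrow> real ^ 'd \<Rightarrow> (real \<Rightarrow> 'a \<Rightarrow> real) \<Rightarrow> bool" where
  "solves_ode M B T f t y z Y \<longleftrightarrow>
     (AE \<omega> in M. \<forall>s\<in>{t..T}.
        set_integrable lborel {t..s} (\<lambda>r. f \<omega> r (Y r \<omega>) z) \<and>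
        Y s \<omega> = y - (LINT r:{t..s}|lborel. f \<omega> r (Y r \<omega>) z) + z \<bullet> (B s \<omega> - B t \<omega>))"

end

theory Submission
  imports Defs
begin

text \<open>Fix \<open>(y, z)\<close> and a path \<open>\<omega>\<close> along which \<open>f(\<cdot>, y, z)\<close> is integrable in time, \<open>B\<close> is
  continuous, and the solutions \<open>Y\<^sup>q\<close> started from \<open>y\<close> at every rational time \<open>q\<close> exist.
  For a rational \<open>q\<close> just below \<open>r\<close>, \<open>Y\<^sup>q\<close> stays close to \<open>y\<close> on \<open>[q, r]\<close>: its drift is
  bounded by \<open>\<integral>\<^sub>q\<^sup>r |f(u, y, z)| du\<close> plus \<open>\<mu> (r - q) sup |Y\<^sup>q - y|\<close>, and the latter term is absorbed
  once \<open>\<mu> (r - q) \<le> 1/2\<close>; its noise is bounded by the oscillation of \<open>B\<close>. So \<open>f(r, y, z)\<close> is a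
  limit of the values \<open>f(r, Y\<^sup>q\<^sub>r, z)\<close>. Only countably many \<open>q\<close> are involved, so almost surely
  all these values lie in the closed set \<open>[0, \<infinity>)\<close> (resp. \<open>{0}\<close>), and hence so does \<open>f(r, y, z)\<close>.\<close>

lemma Rats_dense_below:
  fixes r :: real
  assumes "0 \<le> r" and "\<delta> > 0"
  obtains q where "q \<in> \<rat>" "0 \<le> q" "q \<le> r" "r - q < \<delta>"
proof (cases "r = 0")
  case True then show ?thesis using that[of 0] assms by auto
next
  case False
  then have "max 0 (r - \<delta>) < r" using assms by auto
  then obtain q where "q \<in> \<rat>" "max 0 (r - \<delta>) < q" "q < r" using Rats_dense_in_real by blast
  then show ?thesis using that[of q] by auto
qed

lemma abs_deviation_le_integral_abs:
  fixes h :: "real \<Rightarrow> real" and w z :: "real ^ 'd"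
  assumes "set_integrable lborel {q..s} h" and "x = y - (LINT u:{q..s}|lborel. h u) + z \<bullet> w" and "norm w \<le> c"
  shows "\<bar>x - y\<bar> \<le> integral {q..s} (\<lambda>u. \<bar>h u\<bar>) + norm z * c"
proof -
  have "\<bar>integral {q..s} h\<bar> \<le> integral {q..s} (\<lambda>u. \<bar>h u\<bar>)"
    using Henstock_Kurzweil_Integration.integral_norm_bound_integral[of h _ "\<lambda>u. \<bar>h u\<bar>"]
      set_borel_integral_eq_integral(1)[OF assms(1)] set_borel_integral_eq_integral(1)[OF set_integrable_abs[OF assms(1)]]
    by auto
  moreover have "\<bar>z \<bullet> w\<bar> \<le> norm z * c"
    using Cauchy_Schwarz_ineq2[of z w] assms(3) by (meson norm_ge_zero mult_left_mono order_trans)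
  ultimately show ?thesis using assms(2) set_borel_integral_eq_integral(2)[OF assms(1)] by simp
qed

lemma integral_equation_deviation_le:
  fixes g :: "real \<Rightarrow> real \<Rightarrow> real" and b :: "real \<Rightarrow> real ^ 'd" and x :: "real \<Rightarrow> real"
  assumes Lip: "\<And>u v w. u \<in> {q..r} \<Longrightarrow> \<bar>g u v - g u w\<bar> \<le> \<mu> * \<bar>v - w\<bar>"
    and short: "\<mu> * (r - q) \<le> 1/2"
    and int_y: "(\<lambda>u. \<bar>g u y\<bar>) integrable_on {q..r}"
    and small_y: "integral {q..r} (\<lambda>u. \<bar>g u y\<bar>) \<le> a"
    and small_b: "\<And>s. s \<in> {q..r} \<Longrightarrow> norm (b s - b q) \<le> c"
    and sol: "\<And>s. s \<in> {q..r} \<Longrightarrow> set_integrable lborel {q..s} (\<lambda>u. g u (x u)) \<and>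
                x s = y - (LINT u:{q..s}|lborel. g u (x u)) + z \<bullet> (b s - b q)"
    and s: "s \<in> {q..r}"
  shows "\<bar>x s - y\<bar> \<le> 2 * (a + norm z * c)"
proof -
  have \<mu>: "\<mu> \<ge> 0" using Lip[OF s, of 1 0] by simp
  define gx where "gx u = g u (x u)" for u
  have int_gx: "(\<lambda>u. \<bar>gx u\<bar>) integrable_on {q..s}" if "s \<in> {q..r}" for s
    using sol[OF that] set_borel_integral_eq_integral(1)[OF set_integrable_abs] unfolding gx_def by blast
  have dev_le: "\<bar>x s - y\<bar> \<le> integral {q..s} (\<lambda>u. \<bar>gx u\<bar>) + norm z * c" if "s \<in> {q..r}" for s
    using sol[OF that] small_b[OF that] unfolding gx_def by (intro abs_deviation_le_integral_abs) auto
  have "bdd_above ((\<lambda>s. \<bar>x s - y\<bar>) ` {q..r})"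
  proof (rule bdd_aboveI2)
    fix s assume s: "s \<in> {q..r}"
    have "integral {q..s} (\<lambda>u. \<bar>gx u\<bar>) \<le> integral {q..r} (\<lambda>u. \<bar>gx u\<bar>)"
      using s int_gx[OF s] int_gx[of r] by (intro integral_subset_le) auto
    then show "\<bar>x s - y\<bar> \<le> integral {q..r} (\<lambda>u. \<bar>gx u\<bar>) + norm z * c"
      using dev_le[OF s] by linarith
  qed
  \<comment> \<open>The Lipschitz term contributes at most \<open>\<mu> (r - q) S \<le> S / 2\<close>, so \<open>S \<le> a + S / 2 + \<parallel>z\<parallel> c\<close>.\<close>
  define S where "S = (SUP s\<in>{q..r}. \<bar>x s - y\<bar>)"
  have le_S: "\<bar>x s - y\<bar> \<le> S" if "s \<in> {q..r}" for s
    unfolding S_def using \<open>bdd_above _\<close> that by (rule cSUP_upper2) auto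
  have S_nonneg: "S \<ge> 0" using le_S[OF s] by linarith
  have "\<bar>x s - y\<bar> \<le> a + S / 2 + norm z * c" if s: "s \<in> {q..r}" for s
  proof -
    have int_y_s: "(\<lambda>u. \<bar>g u y\<bar>) integrable_on {q..s}"
      using int_y s by (auto intro: integrable_on_subinterval)
    have "integral {q..s} (\<lambda>u. \<bar>gx u\<bar>) \<le> integral {q..s} (\<lambda>u. \<bar>g u y\<bar> + \<mu> * S)"
    proof (rule integral_le[OF int_gx[OF s]])
      show "(\<lambda>u. \<bar>g u y\<bar> + \<mu> * S) integrable_on {q..s}" using int_y_s by (intro integrable_add) auto
      fix u assume u: "u \<in> {q..s}"
      have "\<bar>gx u - g u y\<bar> \<le> \<mu> * S"
        using Lip[of u "x u" y] le_S[of u] u s \<mu> unfolding gx_def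
        by (meson atLeastAtMost_iff order_trans mult_left_mono)
      then show "\<bar>gx u\<bar> \<le> \<bar>g u y\<bar> + \<mu> * S" by linarith
    qed
    also have "\<dots> = integral {q..s} (\<lambda>u. \<bar>g u y\<bar>) + \<mu> * S * (s - q)"
      using int_y_s s by (subst integral_add) auto
    also have "\<dots> \<le> a + S / 2"
    proof -
      have "integral {q..s} (\<lambda>u. \<bar>g u y\<bar>) \<le> integral {q..r} (\<lambda>u. \<bar>g u y\<bar>)"
        using s int_y_s int_y by (intro integral_subset_le) auto
      moreover have "\<mu> * (s - q) \<le> \<mu> * (r - q)"
        using s \<mu> by (intro mult_left_mono) auto
      then have "\<mu> * (s - q) * S \<le> 1/2 * S"
        using short S_nonneg by (intro mult_right_mono) auto
      ultimately show ?thesis using small_y by (simp add: algebra_simps)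
    qed
    finally show ?thesis using dev_le[OF s] by linarith
  qed
  then have "S \<le> a + S / 2 + norm z * c"
    unfolding S_def using s by (intro cSUP_least) auto
  then show ?thesis using le_S[OF s] by (simp add: distrib_left)
qed

lemma integral_equation_solution_near_start:
  fixes g :: "real \<Rightarrow> real \<Rightarrow> real" and b :: "real \<Rightarrow> real ^ 'd" and x :: "real \<Rightarrow> real \<Rightarrow> real"
  assumes Lip: "\<And>u v w. u \<in> {0..T} \<Longrightarrow> \<bar>g u v - g u w\<bar> \<le> \<mu> * \<bar>v - w\<bar>"
    and cont_b: "continuous_on {0..T} b"
    and int_y: "(\<lambda>u. \<bar>g u y\<bar>) integrable_on {0..T}"
    and Q: "Q \<subseteq> {0..T}"
    and sol: "\<And>q s. q \<in> Q \<Longrightarrow> s \<in> {q..T} \<Longrightarrow>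
                set_integrable lborel {q..s} (\<lambda>u. g u (x q u)) \<and>
                x q s = y - (LINT u:{q..s}|lborel. g u (x q u)) + z \<bullet> (b s - b q)"
    and r: "r \<in> {0..T}" and "\<epsilon> > 0"
  shows "\<exists>\<delta>>0. \<forall>q\<in>Q. q \<le> r \<longrightarrow> r - q < \<delta> \<longrightarrow> \<bar>x q r - y\<bar> \<le> \<epsilon>"
proof -
  have \<mu>: "\<mu> \<ge> 0" using Lip[OF r, of 1 0] by simp
  define e where "e = \<epsilon> / (2 * (1 + 2 * norm z))"
  have z: "1 + 2 * norm z > 0" by (simp add: add_pos_nonneg)
  then have e: "e > 0" using \<open>\<epsilon> > 0\<close> unfolding e_def by simp
  have "2 * (e + norm z * (2 * e)) = e * (2 * (1 + 2 * norm z))" by (simp add: algebra_simps)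
  also have "\<dots> = \<epsilon>" using z unfolding e_def by simp
  finally have e_\<epsilon>: "2 * (e + norm z * (2 * e)) = \<epsilon>" .
  have "continuous_on {0..T} (\<lambda>t. integral {0..t} (\<lambda>u. \<bar>g u y\<bar>))"
    using int_y by (rule indefinite_integral_continuous_1)
  then obtain d1 where d1: "d1 > 0" "\<And>t. t \<in> {0..T} \<Longrightarrow> dist t r < d1 \<Longrightarrow>
      dist (integral {0..t} (\<lambda>u. \<bar>g u y\<bar>)) (integral {0..r} (\<lambda>u. \<bar>g u y\<bar>)) < e"
    using r e unfolding continuous_on_iff by meson
  obtain d2 where d2: "d2 > 0" "\<And>t. t \<in> {0..T} \<Longrightarrow> dist t r < d2 \<Longrightarrow> dist (b t) (b r) < e"
    using cont_b r e unfolding continuous_on_iff by meson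
  define \<delta> where "\<delta> = min (min d1 d2) (1 / (2 * \<mu> + 1))"
  have "\<forall>q\<in>Q. q \<le> r \<longrightarrow> r - q < \<delta> \<longrightarrow> \<bar>x q r - y\<bar> \<le> \<epsilon>"
  proof (intro ballI impI)
    fix q assume "q \<in> Q" "q \<le> r" "r - q < \<delta>"
    have near: "t \<in> {0..T}" "dist t r < d1" "dist t r < d2" if "t \<in> {q..r}" for t
      using that \<open>q \<in> Q\<close> Q r \<open>r - q < \<delta>\<close> unfolding \<delta>_def dist_real_def by auto
    have q_qr: "q \<in> {q..r}" using \<open>q \<le> r\<close> by simp
    have "integral {0..q} (\<lambda>u. \<bar>g u y\<bar>) + integral {q..r} (\<lambda>u. \<bar>g u y\<bar>) = integral {0..r} (\<lambda>u. \<bar>g u y\<bar>)"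
      using near(1)[OF q_qr] r int_y \<open>q \<le> r\<close>
      by (intro Henstock_Kurzweil_Integration.integral_combine) (auto intro: integrable_on_subinterval)
    then have small_y: "integral {q..r} (\<lambda>u. \<bar>g u y\<bar>) \<le> e"
      using d1(2)[OF near(1,2)[OF q_qr]] by (simp add: dist_real_def)
    have small_b: "norm (b s - b q) \<le> 2 * e" if "s \<in> {q..r}" for s
    proof -
      have "norm (b s - b q) \<le> dist (b s) (b r) + dist (b q) (b r)"
        unfolding dist_norm[symmetric] by (rule dist_triangle2)
      then show ?thesis using d2(2)[OF near(1,3)[OF that]] d2(2)[OF near(1,3)[OF q_qr]] by linarith
    qed
    have "\<mu> * (r - q) \<le> \<mu> * (1 / (2 * \<mu> + 1))"
      using \<open>r - q < \<delta>\<close> \<mu> unfolding \<delta>_def by (intro mult_left_mono) auto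
    also have "\<dots> \<le> 1/2" using \<mu> by (simp add: field_simps)
    finally have short: "\<mu> * (r - q) \<le> 1/2" .
    have "{q..r} \<subseteq> {0..T}" using near(1) by blast
    then have "\<bar>x q r - y\<bar> \<le> 2 * (e + norm z * (2 * e))"
      using \<open>q \<le> r\<close> r Lip small_y small_b short sol[OF \<open>q \<in> Q\<close>] int_y
      by (intro integral_equation_deviation_le[of q r g \<mu> y _ b]) (auto intro: integrable_on_subinterval)
    then show "\<bar>x q r - y\<bar> \<le> \<epsilon>" using e_\<epsilon> by simp
  qed
  moreover have "\<delta> > 0" unfolding \<delta>_def using d1 d2 \<mu> by simp
  ultimately show ?thesis by blast
qed

lemma value_in_closure_of_solutions_from_rationals:
  fixes g :: "real \<Rightarrow> real \<Rightarrow> real" and b :: "real \<Rightarrow> real ^ 'd" and x :: "real \<Rightarrow> real \<Rightarrow> real"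
  assumes Lip: "\<And>u v w. u \<in> {0..T} \<Longrightarrow> \<bar>g u v - g u w\<bar> \<le> \<mu> * \<bar>v - w\<bar>"
    and cont_b: "continuous_on {0..T} b"
    and int_y: "(\<lambda>u. \<bar>g u y\<bar>) integrable_on {0..T}"
    and sol: "\<And>q s. q \<in> \<rat> \<inter> {0..T} \<Longrightarrow> s \<in> {q..T} \<Longrightarrow>
                set_integrable lborel {q..s} (\<lambda>u. g u (x q u)) \<and>
                x q s = y - (LINT u:{q..s}|lborel. g u (x q u)) + z \<bullet> (b s - b q)"
    and r: "r \<in> {0..T}"
  shows "g r y \<in> closure {g r (x q r) | q. q \<in> \<rat> \<inter> {0..T} \<and> q \<le> r}"
  unfolding closure_approachable
proof (intro allI impI)
  fix \<epsilon> :: real assume "\<epsilon> > 0"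
  have \<mu>: "\<mu> \<ge> 0" using Lip[OF r, of 1 0] by simp
  then have "\<epsilon> / (\<mu> + 1) > 0" using \<open>\<epsilon> > 0\<close> by simp
  from integral_equation_solution_near_start[where Q="\<rat> \<inter> {0..T}", OF Lip cont_b int_y _ sol r this]
  obtain \<delta> where "\<delta> > 0" and close: "\<And>q. q \<in> \<rat> \<inter> {0..T} \<Longrightarrow> q \<le> r \<Longrightarrow> r - q < \<delta> \<Longrightarrow>
      \<bar>x q r - y\<bar> \<le> \<epsilon> / (\<mu> + 1)"
    by auto
  obtain q where q: "q \<in> \<rat>" "0 \<le> q" "q \<le> r" "r - q < \<delta>"
    using Rats_dense_below r \<open>\<delta> > 0\<close> by auto
  then have q_T: "q \<in> \<rat> \<inter> {0..T}" using r by auto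
  have "dist (g r (x q r)) (g r y) \<le> \<mu> * \<bar>x q r - y\<bar>"
    using Lip[OF r] by (simp add: dist_real_def)
  also have "\<dots> \<le> \<mu> * (\<epsilon> / (\<mu> + 1))"
    using close[OF q_T q(3,4)] \<mu> by (rule mult_left_mono)
  also have "\<dots> < \<epsilon>"
    using \<mu> \<open>\<epsilon> > 0\<close> by (simp add: field_simps)
  finally show "\<exists>v \<in> {g r (x q r) | q. q \<in> \<rat> \<inter> {0..T} \<and> q \<le> r}. dist v (g r y) < \<epsilon>"
    using q_T q by fastforce
qed

lemma integrable_if_square_integrable_on_finite_support:
  fixes h :: "'a \<Rightarrow> real"
  assumes h: "h \<in> borel_measurable N" and sq: "(\<integral>\<^sup>+ x. ennreal ((h x)\<^sup>2) \<partial>N) < \<infinity>"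
    and A: "A \<in> sets N" "emeasure N A < \<infinity>" and supp: "\<And>x. x \<notin> A \<Longrightarrow> h x = 0"
  shows "integrable N h"
proof (rule Bochner_Integration.integrable_bound[where f="\<lambda>x. indicator A x + (h x)\<^sup>2"])
  show "integrable N (\<lambda>x. indicator A x + (h x)\<^sup>2)"
  proof (rule Bochner_Integration.integrable_add)
    show "integrable N (\<lambda>x. (h x)\<^sup>2)"
      using h sq by (intro integrableI_nonneg) auto
  qed (use A in simp)
  have "\<bar>h x\<bar> \<le> indicator A x + (h x)\<^sup>2" for x
  proof (cases "x \<in> A")
    case True
    have "\<bar>h x\<bar> \<le> 1 + (h x)\<^sup>2"
    proof (cases "\<bar>h x\<bar> \<le> 1")
      case False
      then have "\<bar>h x\<bar> * 1 \<le> \<bar>h x\<bar> * \<bar>h x\<bar>" by (intro mult_left_mono) auto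
      then show ?thesis by (simp add: power2_eq_square)
    qed (use zero_le_power2[of "h x"] in linarith)
    then show ?thesis using True by simp
  qed (simp add: supp)
  then show "AE x in N. norm (h x) \<le> norm (indicator A x + (h x)\<^sup>2)" by auto
qed (use h in simp)

lemma (in sigma_finite_measure) AE_pair_measure_snd:
  assumes "AE \<omega> in M. P \<omega>"
  shows "AE p in N \<Otimes>\<^sub>M M. P (snd p)"
proof -
  obtain A where A: "A \<in> null_sets M" "{\<omega> \<in> space M. \<not> P \<omega>} \<subseteq> A"
    using assms unfolding eventually_ae_filter by blast
  then have "space N \<times> A \<in> null_sets (N \<Otimes>\<^sub>M M)" by auto
  moreover have "{p \<in> space (N \<Otimes>\<^sub>M M). \<not> P (snd p)} \<subseteq> space N \<times> A"
    using A by (auto simp: space_pair_measure)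
  ultimately show ?thesis by (rule AE_I')
qed

lemma predictable_sets_subset_sets:
  assumes "brownian_motion M B"
  shows "predictable_sets M B T \<subseteq> sets (lborel \<Otimes>\<^sub>M M)"
proof -
  have "bm_filtration M B s \<subseteq> sets M" for s
    using assms unfolding brownian_motion_def bm_filtration_def
    by (intro sets.sigma_sets_subset') (auto intro: measurable_sets)
  then show ?thesis
    unfolding predictable_sets_def by (intro sets.sigma_sets_subset') (auto intro!: pair_measureI)
qed

lemma L2F_zero_extension_measurable:
  assumes "brownian_motion M B" and "L2F M B T \<phi>"
  shows "(\<lambda>p. if p \<in> {0..T} \<times> space M then \<phi> (snd p) (fst p) else 0) \<in> borel_measurable (lborel \<Otimes>\<^sub>M M)"
proof (rule measurableI)
  fix A :: "real set" assume A: "A \<in> sets borel"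
  have "{p \<in> {0..T} \<times> space M. \<phi> (snd p) (fst p) \<in> A} \<in> sets (lborel \<Otimes>\<^sub>M M)"
    using assms A predictable_sets_subset_sets unfolding L2F_def by blast
  moreover have "{0..T} \<times> space M \<in> sets (lborel \<Otimes>\<^sub>M M)" by (intro pair_measureI) auto
  moreover have "(\<lambda>p. if p \<in> {0..T} \<times> space M then \<phi> (snd p) (fst p) else 0) -` A \<inter> space (lborel \<Otimes>\<^sub>M M) =
     {p \<in> {0..T} \<times> space M. \<phi> (snd p) (fst p) \<in> A} \<union>
     (if 0 \<in> A then space (lborel \<Otimes>\<^sub>M M) - {0..T} \<times> space M else {})"
    by (auto simp: space_pair_measure split: if_splits)
  ultimately show "(\<lambda>p. if p \<in> {0..T} \<times> space M then \<phi> (snd p) (fst p) else 0) -` A \<inter> space (lborel \<Otimes>\<^sub>M M)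
      \<in> sets (lborel \<Otimes>\<^sub>M M)"
    using sets.top[of "lborel \<Otimes>\<^sub>M M"] by (auto intro!: sets.Un sets.Diff)
qed auto

lemma L2F_AE_set_integrable:
  assumes BM: "brownian_motion M B" and L2: "L2F M B T \<phi>"
  shows "AE \<omega> in M. set_integrable lborel {0..T} (\<phi> \<omega>)"
proof -
  interpret prob_space M using BM unfolding brownian_motion_def by auto
  define H where "H p = (if p \<in> {0..T} \<times> space M then \<phi> (snd p) (fst p) else 0)" for p
  have H_int: "integrable (lborel \<Otimes>\<^sub>M M) H"
  proof (rule integrable_if_square_integrable_on_finite_support)
    show "H \<in> borel_measurable (lborel \<Otimes>\<^sub>M M)"
      unfolding H_def using L2F_zero_extension_measurable[OF BM L2] .
    have "(\<integral>\<^sup>+ p. ennreal ((H p)\<^sup>2) \<partial>(lborel \<Otimes>\<^sub>M M)) =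
      (\<integral>\<^sup>+ p. indicator ({0..T} \<times> space M) p * ennreal ((\<phi> (snd p) (fst p))\<^sup>2) \<partial>(lborel \<Otimes>\<^sub>M M))"
      by (rule nn_integral_cong) (auto simp: H_def indicator_def)
    then show "(\<integral>\<^sup>+ p. ennreal ((H p)\<^sup>2) \<partial>(lborel \<Otimes>\<^sub>M M)) < \<infinity>"
      using L2 unfolding L2F_def by simp
    show "{0..T} \<times> space M \<in> sets (lborel \<Otimes>\<^sub>M M)" by (intro pair_measureI) auto
    then show "emeasure (lborel \<Otimes>\<^sub>M M) ({0..T} \<times> space M) < \<infinity>"
      using emeasure_pair_measure_Times[of "{0..T}" lborel "space M"]
      by (simp add: emeasure_space_1 emeasure_lborel_Icc_eq)
  qed (simp add: H_def)
  have "AE \<omega> in M. integrable lborel (\<lambda>u. H (u, \<omega>))"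
  proof -
    interpret pair_sigma_finite lborel M ..
    show ?thesis using AE_integrable_snd[of "\<lambda>u \<omega>. H (u, \<omega>)"] H_int by simp
  qed
  with AE_space show ?thesis
  proof eventually_elim
    case (elim \<omega>)
    then have "(\<lambda>u. H (u, \<omega>)) = (\<lambda>u. indicator {0..T} u *\<^sub>R \<phi> \<omega> u)"
      by (auto simp: H_def indicator_def)
    then show ?case using elim(2) unfolding set_integrable_def by simp
  qed
qed

lemma AE_value_in_closure_of_solutions:
  fixes M :: "'a measure" and B :: "real \<Rightarrow> 'a \<Rightarrow> real ^ 'd"
    and f :: "'a \<Rightarrow> real \<Rightarrow> real \<Rightarrow> real ^ 'd \<Rightarrow> real"
    and Y :: "real \<Rightarrow> real \<Rightarrow> real ^ 'd \<Rightarrow> real \<Rightarrow> 'a \<Rightarrow> real"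
  assumes BM: "brownian_motion M B"
    and f_L2: "\<And>y z. L2F M B T (\<lambda>\<omega> t. f \<omega> t y z)"
    and f_Lip: "\<And>\<omega> t y y' z z'. \<omega> \<in> space M \<Longrightarrow> t \<in> {0..T} \<Longrightarrow>
                  \<bar>f \<omega> t y z - f \<omega> t y' z'\<bar> \<le> \<mu> * (\<bar>y - y'\<bar> + norm (z - z'))"
    and Y_sol: "\<And>t y z. t \<in> {0..T} \<Longrightarrow> solves_ode M B T f t y z (Y t y z)"
  shows "AE p in lborel \<Otimes>\<^sub>M M. fst p \<in> {0..T} \<longrightarrow> f (snd p) (fst p) y z \<in>
           closure {f (snd p) (fst p) (Y q y z (fst p) (snd p)) z | q. q \<in> \<rat> \<inter> {0..T} \<and> q \<le> fst p}"
proof -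
  interpret prob_space M using BM unfolding brownian_motion_def by auto
  have "AE \<omega> in M. set_integrable lborel {0..T} (\<lambda>u. f \<omega> u y z)"
    using L2F_AE_set_integrable[OF BM f_L2] .
  moreover have "AE \<omega> in M. \<forall>q\<in>\<rat> \<inter> {0..T}. \<forall>s\<in>{q..T}.
        set_integrable lborel {q..s} (\<lambda>r. f \<omega> r (Y q y z r \<omega>) z) \<and>
        Y q y z s \<omega> = y - (LINT r:{q..s}|lborel. f \<omega> r (Y q y z r \<omega>) z) + z \<bullet> (B s \<omega> - B q \<omega>)"
    using Y_sol unfolding solves_ode_def by (subst AE_ball_countable) (auto intro: countable_Int1 countable_rat)
  ultimately have "AE \<omega> in M. \<forall>r\<in>{0..T}. f \<omega> r y z \<in>
      closure {f \<omega> r (Y q y z r \<omega>) z | q. q \<in> \<rat> \<inter> {0..T} \<and> q \<le> r}"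
    using AE_space
  proof eventually_elim
    case (elim \<omega>)
    have int_y: "(\<lambda>u. \<bar>f \<omega> u y z\<bar>) integrable_on {0..T}"
      using elim(1) by (rule set_borel_integral_eq_integral(1)[OF set_integrable_abs])
    have cont_B: "continuous_on {0..T} (\<lambda>s. B s \<omega>)"
      using BM elim(3) unfolding brownian_motion_def by (auto intro: continuous_on_subset)
    have Lip: "\<bar>f \<omega> u v z - f \<omega> u w z\<bar> \<le> \<mu> * \<bar>v - w\<bar>" if "u \<in> {0..T}" for u v w
      using f_Lip[OF elim(3) that, of v z w z] by simp
    show ?case
      using elim(2)
      by (intro ballI value_in_closure_of_solutions_from_rationals[where x="\<lambda>q s. Y q y z s \<omega>", OF Lip cont_B int_y])
        auto
  qed
  then have "AE p in lborel \<Otimes>\<^sub>M M. \<forall>r\<in>{0..T}. f (snd p) r y z \<in>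
      closure {f (snd p) r (Y q y z r (snd p)) z | q. q \<in> \<rat> \<inter> {0..T} \<and> q \<le> r}"
    by (rule AE_pair_measure_snd)
  then show ?thesis by (rule eventually_mono) auto
qed

lemma AE_in_closed_if_solutions_in_closed:
  fixes M :: "'a measure" and B :: "real \<Rightarrow> 'a \<Rightarrow> real ^ 'd"
    and f :: "'a \<Rightarrow> real \<Rightarrow> real \<Rightarrow> real ^ 'd \<Rightarrow> real"
    and Y :: "real \<Rightarrow> real \<Rightarrow> real ^ 'd \<Rightarrow> real \<Rightarrow> 'a \<Rightarrow> real"
  assumes BM: "brownian_motion M B"
    and f_L2: "\<And>y z. L2F M B T (\<lambda>\<omega> t. f \<omega> t y z)"
    and f_Lip: "\<And>\<omega> t y y' z z'. \<omega> \<in> space M \<Longrightarrow> t \<in> {0..T} \<Longrightarrow>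
                  \<bar>f \<omega> t y z - f \<omega> t y' z'\<bar> \<le> \<mu> * (\<bar>y - y'\<bar> + norm (z - z'))"
    and Y_sol: "\<And>t y z. t \<in> {0..T} \<Longrightarrow> solves_ode M B T f t y z (Y t y z)"
    and "closed C"
    and sol_in_C: "\<And>t. t \<in> {0..T} \<Longrightarrow>
          AE p in lborel \<Otimes>\<^sub>M M. fst p \<in> {t..T} \<longrightarrow> f (snd p) (fst p) (Y t y z (fst p) (snd p)) z \<in> C"
  shows "AE p in lborel \<Otimes>\<^sub>M M. fst p \<in> {0..T} \<longrightarrow> f (snd p) (fst p) y z \<in> C"
proof -
  have "AE p in lborel \<Otimes>\<^sub>M M. \<forall>q\<in>\<rat> \<inter> {0..T}.
          fst p \<in> {q..T} \<longrightarrow> f (snd p) (fst p) (Y q y z (fst p) (snd p)) z \<in> C"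
    using sol_in_C by (subst AE_ball_countable) (auto intro: countable_Int1 countable_rat)
  moreover have "AE p in lborel \<Otimes>\<^sub>M M. fst p \<in> {0..T} \<longrightarrow> f (snd p) (fst p) y z \<in>
           closure {f (snd p) (fst p) (Y q y z (fst p) (snd p)) z | q. q \<in> \<rat> \<inter> {0..T} \<and> q \<le> fst p}"
    by (rule AE_value_in_closure_of_solutions[OF BM f_L2 f_Lip Y_sol])
  ultimately show ?thesis
  proof eventually_elim
    case (elim p)
    show ?case
    proof
      assume "fst p \<in> {0..T}"
      then have "{f (snd p) (fst p) (Y q y z (fst p) (snd p)) z | q. q \<in> \<rat> \<inter> {0..T} \<and> q \<le> fst p} \<subseteq> C"
        using elim(1) by auto
      then show "f (snd p) (fst p) y z \<in> C"
        using elim(2) \<open>fst p \<in> {0..T}\<close> closure_minimal \<open>closed C\<close> by blast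
    qed
  qed
qed

theorem lemma5p3:
  fixes M :: "'a measure" and B :: "real \<Rightarrow> 'a \<Rightarrow> real ^ 'd"
    and f :: "'a \<Rightarrow> real \<Rightarrow> real \<Rightarrow> real ^ 'd \<Rightarrow> real"
    and Y :: "real \<Rightarrow> real \<Rightarrow> real ^ 'd \<Rightarrow> real \<Rightarrow> 'a \<Rightarrow> real"
    and T \<mu> :: real
  assumes BM: "brownian_motion M B"
    and T_pos: "T > 0"
    and f_L2: "\<And>y z. L2F M B T (\<lambda>\<omega> t. f \<omega> t y z)"
    and f_Lip: "\<And>\<omega> t y y' z z'. \<omega> \<in> space M \<Longrightarrow> t \<in> {0..T} \<Longrightarrow>
                  \<bar>f \<omega> t y z - f \<omega> t y' z'\<bar> \<le> \<mu> * (\<bar>y - y'\<bar> + norm (z - z'))"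
    and Y_sol: "\<And>t y z. t \<in> {0..T} \<Longrightarrow> solves_ode M B T f t y z (Y t y z)"
  shows "((\<forall>t y z. t \<in> {0..T} \<longrightarrow>
             (AE p in lborel \<Otimes>\<^sub>M M. fst p \<in> {t..T} \<longrightarrow> f (snd p) (fst p) (Y t y z (fst p) (snd p)) z \<ge> 0))
          \<longrightarrow> (\<forall>y z. AE p in lborel \<Otimes>\<^sub>M M. fst p \<in> {0..T} \<longrightarrow> f (snd p) (fst p) y z \<ge> 0))
       \<and> ((\<forall>t y z. t \<in> {0..T} \<longrightarrow>
             (AE p in lborel \<Otimes>\<^sub>M M. fst p \<in> {t..T} \<longrightarrow> f (snd p) (fst p) (Y t y z (fst p) (snd p)) z = 0))
          \<longrightarrow> (\<forall>y z. AE p in lborel \<Otimes>\<^sub>M M. fst p \<in> {0..T} \<longrightarrow> f (snd p) (fst p) y z = 0))"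
proof (intro conjI impI allI)
  fix y z
  assume "\<forall>t y z. t \<in> {0..T} \<longrightarrow> (AE p in lborel \<Otimes>\<^sub>M M.
            fst p \<in> {t..T} \<longrightarrow> f (snd p) (fst p) (Y t y z (fst p) (snd p)) z \<ge> 0)"
  then show "AE p in lborel \<Otimes>\<^sub>M M. fst p \<in> {0..T} \<longrightarrow> f (snd p) (fst p) y z \<ge> 0"
    using AE_in_closed_if_solutions_in_closed[OF BM f_L2 f_Lip Y_sol closed_atLeast, where y=y and z=z] by simp
next
  fix y z
  assume "\<forall>t y z. t \<in> {0..T} \<longrightarrow> (AE p in lborel \<Otimes>\<^sub>M M.
            fst p \<in> {t..T} \<longrightarrow> f (snd p) (fst p) (Y t y z (fst p) (snd p)) z = 0)"
  then show "AE p in lborel \<Otimes>\<^sub>M M. fst p \<in> {0..T} \<longrightarrow> f (snd p) (fst p) y z = 0"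
    using AE_in_closed_if_solutions_in_closed[OF BM f_L2 f_Lip Y_sol closed_singleton, where y=y and z=z] by simp
qed

end
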